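(* Consider a diffeomorphism geometric wavelet transform (DGWT) as in the context and let $m\in\{2,\ldots,M\}$. Then for every $(y_m,g_m)\in Y_m\times N_m$ and every $g_m'\in N_m$, $$|\det J(y_m,g_m'^{-1}g_m)|=|\det D_m(g_m')|\,|\det J(y_m,g_m)|,$$ where $J$ is the Jacobian of $C_m$.
   Context: Physical quantities are the groups $(\mathbb{R},+)$, $(e^{i\mathbb{R}},\cdot)$, $(\mathbb{Z},+)$, $(e^{2\pi i\mathbb{Z}/n},\cdot)$. Let $M\ge 2$; for $m=2,\ldots,M$ let $N_m=G_m^1\times\cdots\times G_m^{K_m}$ be a direct product of copies of one physical quantity, with elements $g_m$ and operation $\bullet$. $H_1$ is the nested semidirect product $H_{M-1}=N_M$, $H_{m}=N_{m+1}\rtimes H_{m+1}$, elements $h_m=(g_{m+1},\ldots,g_M)$, product $(g_m,h_m)(g_m',h_m')=(g_m\bullet A_m(h_m)g_m',h_mh_m')$ with $A_m$ a smooth action by automorphisms. $D:H_1\to GL(\mathbb{R}^N)$ is a representation, $D_m=D|_{N_m}$, $D(h_1)=D_2(g_2)\cdots D_M(g_M)$. $G=\mathbb{R}^N\rtimes H_1$ with $(x,h_1)(x',h_1')=(x+D(h_1)x',h_1h_1')$, $A_1(h_1)=D(h_1)$. Frequencies are row vectors; $U=\omega_0D(H_1)$ is open dense for some $\omega_0$. The representation $\hat\pi(g)\hat f(\omega)=|\det D(h_1)|^{1/2}e^{i\omega\cdot g_1}\hat f(\omega D(h_1))$ on $L^2(U)$ (frequency form of $\pi(g)f(x)=|\det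 D(h_1)^{-1}|^{1/2}f(D(h_1)^{-1}(x-g_1))$) is assumed square integrable, and the resulting wavelet transform is assumed simply dilated: for each $m$ there is a $quantity_m$ transform, i.e. a bounded linear $\Psi_m:L^2(U)\to L^2(Y_m\times N_m)$ with $\Psi_m\pi_m(g_m')\Psi_m^*=L_m(g_m')$ ($[L_mF](y,g_m)=F(y,g_m'^{-1}g_m)$, $\pi_m$ the restriction of $\hat\pi$ to $N_m$) and $\rho^m(g')^*\breve{\mathbf Q}_m\rho^m(g')=g_m'\bullet A_m(h_m')\breve{\mathbf Q}_m$ with $\rho^m=\Psi_m\hat\pi\Psi_m^*$ and $\breve{\mathbf Q}_m$ the tuple of multiplications by $g_m^k$; and $A_m=I$ when $G_m^1$ is $e^{i\mathbb{R}}$ or $e^{2\pi i\mathbb{Z}/n}$. DGWT: for each $m=2,\ldots,M$, with $Y_m=\prod_{j\ne 1,m}N_j$, $y_m=(g_j)_{j\ne1,m}$, $D^m(y_m)=\prod_{j\neq 1,m}D_j(g_j)$ (in increasing order of $j$), there is $\omega_m$ with $C_m(y_m,g_m)=\omega_mD^m(y_m)D_m(g_m^{-1})$ a diffeomorphism $Y_m\times N_m\to U$; $J(y_m,g_m)$ denotes the Jacobian of $C_m$ with respect to the product of the standard Riemannian structures. *)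

theory Defs
  imports "HOL-Analysis.Analysis"
begin

text \<open>The four physical quantities, all realised inside the complex numbers:
  RealLine = (R,+), Circle = (e^{iR},*), Integers = (Z,+), Roots n = (e^{2 pi i Z/n},*).\<close>

datatype quantity = RealLine | Circle | Integers | Roots nat

fun qcarrier :: "quantity \<Rightarrow> complex set" where
  "qcarrier RealLine = range complex_of_real"
| "qcarrier Circle = {z. cmod z = 1}"
| "qcarrier Integers = range (\<lambda>k::int. of_int k)"
| "qcarrier (Roots n) = {z. z ^ n = 1}"

fun additive :: "quantity \<Rightarrow> bool" where
  "additive RealLine = True"
| "additive Integers = True"
| "additive Circle = False"
| "additive (Roots n) = False"

fun continuous_q :: "quantity \<Rightarrow> bool" where
  "continuous_q RealLine = True"
| "continuous_q Circle = True"
| "continuous_q Integers = False"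
| "continuous_q (Roots n) = False"

definition qop :: "quantity \<Rightarrow> complex \<Rightarrow> complex \<Rightarrow> complex" where
  "qop q a b = (if additive q then a + b else a * b)"

definition qinv :: "quantity \<Rightarrow> complex \<Rightarrow> complex" where
  "qinv q a = (if additive q then - a else inverse a)"

definition qunit :: "quantity \<Rightarrow> complex" where
  "qunit q = (if additive q then 0 else 1)"

text \<open>Standard local (isometric) coordinate around a point of a continuous quantity:
  translation on R, rotation by the angle t on the circle; discrete quantities have no
  continuous coordinate.\<close>
definition qshift :: "quantity \<Rightarrow> complex \<Rightarrow> real \<Rightarrow> complex" where
  "qshift q g t = (if q = RealLine then g + complex_of_real t
                   else if q = Circle then g * cis t else g)"

definition Ncarrier :: "quantity \<Rightarrow> nat \<Rightarrow> (nat \<Rightarrow> complex) set" where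
  "Ncarrier q K = {g. (\<forall>k<K. g k \<in> qcarrier q) \<and> (\<forall>k\<ge>K. g k = 0)}"

definition Nmul :: "quantity \<Rightarrow> nat \<Rightarrow> (nat \<Rightarrow> complex) \<Rightarrow> (nat \<Rightarrow> complex) \<Rightarrow> (nat \<Rightarrow> complex)" where
  "Nmul q K g g' = (\<lambda>k. if k < K then qop q (g k) (g' k) else 0)"

definition Ninv :: "quantity \<Rightarrow> nat \<Rightarrow> (nat \<Rightarrow> complex) \<Rightarrow> (nat \<Rightarrow> complex)" where
  "Ninv q K g = (\<lambda>k. if k < K then qinv q (g k) else 0)"

definition Nunit :: "quantity \<Rightarrow> nat \<Rightarrow> (nat \<Rightarrow> complex)" where
  "Nunit q K = (\<lambda>k. if k < K then qunit q else 0)"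

type_synonym tuple = "nat \<Rightarrow> nat \<Rightarrow> complex"

definition Tcarrier :: "(nat \<Rightarrow> quantity) \<Rightarrow> (nat \<Rightarrow> nat) \<Rightarrow> nat set \<Rightarrow> tuple set" where
  "Tcarrier Q K S = {h. (\<forall>j\<in>S. h j \<in> Ncarrier (Q j) (K j)) \<and> (\<forall>j. j \<notin> S \<longrightarrow> h j = (\<lambda>_. 0))}"

definition Hcarrier :: "nat \<Rightarrow> (nat \<Rightarrow> quantity) \<Rightarrow> (nat \<Rightarrow> nat) \<Rightarrow> tuple set" where
  "Hcarrier M Q K = Tcarrier Q K {2..M}"

definition Ycarrier :: "nat \<Rightarrow> (nat \<Rightarrow> quantity) \<Rightarrow> (nat \<Rightarrow> nat) \<Rightarrow> nat \<Rightarrow> tuple set" where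
  "Ycarrier M Q K m = Tcarrier Q K ({2..M} - {m})"

definition tail :: "nat \<Rightarrow> tuple \<Rightarrow> tuple" where
  "tail j h = (\<lambda>i. if j < i then h i else (\<lambda>_. 0))"

text \<open>Product of the nested semidirect product H_1: component j of h h' is
  g_j . A_j(h_j) g'_j  (this is the unfolding of the recursive definition).\<close>
definition Hmul :: "nat \<Rightarrow> (nat \<Rightarrow> quantity) \<Rightarrow> (nat \<Rightarrow> nat)
     \<Rightarrow> (nat \<Rightarrow> tuple \<Rightarrow> (nat \<Rightarrow> complex) \<Rightarrow> (nat \<Rightarrow> complex)) \<Rightarrow> tuple \<Rightarrow> tuple \<Rightarrow> tuple" where
  "Hmul M Q K A h h' = (\<lambda>j. if j \<in> {2..M} then Nmul (Q j) (K j) (h j) (A j (tail j h) (h' j))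
                             else (\<lambda>_. 0))"

definition Hunit :: "nat \<Rightarrow> (nat \<Rightarrow> quantity) \<Rightarrow> (nat \<Rightarrow> nat) \<Rightarrow> tuple" where
  "Hunit M Q K = (\<lambda>j. if j \<in> {2..M} then Nunit (Q j) (K j) else (\<lambda>_. 0))"

definition Dprod :: "(nat \<Rightarrow> (nat \<Rightarrow> complex) \<Rightarrow> real^'n^'n) \<Rightarrow> tuple \<Rightarrow> nat list \<Rightarrow> real^'n^'n" where
  "Dprod D h js = foldr (\<lambda>j B. D j (h j) ** B) js (mat 1)"

definition Dfull :: "nat \<Rightarrow> (nat \<Rightarrow> (nat \<Rightarrow> complex) \<Rightarrow> real^'n^'n) \<Rightarrow> tuple \<Rightarrow> real^'n^'n" where
  "Dfull M D h = Dprod D h [2..<Suc M]"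

definition Dm_other :: "nat \<Rightarrow> nat \<Rightarrow> (nat \<Rightarrow> (nat \<Rightarrow> complex) \<Rightarrow> real^'n^'n) \<Rightarrow> tuple \<Rightarrow> real^'n^'n" where
  "Dm_other M m D y = Dprod D y (filter (\<lambda>j. j \<noteq> m) [2..<Suc M])"

definition group_setting ::
  "nat \<Rightarrow> (nat \<Rightarrow> quantity) \<Rightarrow> (nat \<Rightarrow> nat)
   \<Rightarrow> (nat \<Rightarrow> tuple \<Rightarrow> (nat \<Rightarrow> complex) \<Rightarrow> (nat \<Rightarrow> complex))
   \<Rightarrow> (nat \<Rightarrow> (nat \<Rightarrow> complex) \<Rightarrow> real^'n^'n) \<Rightarrow> bool" where
  "group_setting M Q K A D \<longleftrightarrow>
     2 \<le> M \<and>
     (\<forall>j\<in>{2..M}. \<forall>n. Q j = Roots n \<longrightarrow> n \<ge> 1) \<and>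
     \<comment> \<open>A_j(h_j) is an automorphism of N_j for every h_j in H_j\<close>
     (\<forall>j\<in>{2..M}. \<forall>h\<in>Tcarrier Q K {Suc j..M}.
        bij_betw (A j h) (Ncarrier (Q j) (K j)) (Ncarrier (Q j) (K j)) \<and>
        (\<forall>g\<in>Ncarrier (Q j) (K j). \<forall>g'\<in>Ncarrier (Q j) (K j).
           A j h (Nmul (Q j) (K j) g g') = Nmul (Q j) (K j) (A j h g) (A j h g'))) \<and>
     \<comment> \<open>A_j is an action of H_j\<close>
     (\<forall>j\<in>{2..M}. \<forall>g\<in>Ncarrier (Q j) (K j). A j (tail j (Hunit M Q K)) g = g) \<and>
     (\<forall>j\<in>{2..M}. \<forall>h\<in>Hcarrier M Q K. \<forall>h'\<in>Hcarrier M Q K. \<forall>g\<in>Ncarrier (Q j) (K j).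
        A j (tail j (Hmul M Q K A h h')) g = A j (tail j h) (A j (tail j h') g)) \<and>
     \<comment> \<open>A_j is trivial for circle and root-of-unity quantities\<close>
     (\<forall>j\<in>{2..M}. \<not> additive (Q j) \<longrightarrow> (\<forall>h. \<forall>g\<in>Ncarrier (Q j) (K j). A j h g = g)) \<and>
     \<comment> \<open>D takes values in GL and is a representation of H_1\<close>
     (\<forall>j\<in>{2..M}. \<forall>g\<in>Ncarrier (Q j) (K j). invertible (D j g)) \<and>
     \<comment> \<open>D_j = D restricted to N_j (embedded with all other components the identity)\<close>
     (\<forall>j\<in>{2..M}. D j (Nunit (Q j) (K j)) = mat 1) \<and>
     (\<forall>h\<in>Hcarrier M Q K. \<forall>h'\<in>Hcarrier M Q K.
        Dfull M D (Hmul M Q K A h h') = Dfull M D h ** Dfull M D h')"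

definition Uset :: "nat \<Rightarrow> (nat \<Rightarrow> quantity) \<Rightarrow> (nat \<Rightarrow> nat)
     \<Rightarrow> (nat \<Rightarrow> (nat \<Rightarrow> complex) \<Rightarrow> real^'n^'n) \<Rightarrow> real^'n \<Rightarrow> (real^'n) set" where
  "Uset M Q K D w0 = (\<lambda>h. w0 v* Dfull M D h) ` Hcarrier M Q K"

text \<open>C_m(y_m, g_m) = omega_m D^m(y_m) D_m(g_m^{-1}); frequencies are row vectors.\<close>
definition Cm :: "nat \<Rightarrow> nat \<Rightarrow> (nat \<Rightarrow> quantity) \<Rightarrow> (nat \<Rightarrow> nat)
     \<Rightarrow> (nat \<Rightarrow> (nat \<Rightarrow> complex) \<Rightarrow> real^'n^'n) \<Rightarrow> real^'n \<Rightarrow> tuple \<Rightarrow> (nat \<Rightarrow> complex) \<Rightarrow> real^'n" where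
  "Cm M m Q K D w y g = w v* (Dm_other M m D y ** D m (Ninv (Q m) (K m) g))"

definition contI :: "nat \<Rightarrow> (nat \<Rightarrow> quantity) \<Rightarrow> (nat \<Rightarrow> nat) \<Rightarrow> (nat \<times> nat) set" where
  "contI M Q K = {(j, k). j \<in> {2..M} \<and> k < K j \<and> continuous_q (Q j)}"

text \<open>A fixed enumeration of the continuous coordinates by the index type 'n of R^N
  (exists whenever there are exactly N continuous coordinates; the absolute value of
  the Jacobian determinant does not depend on the choice).\<close>
definition coord_enum :: "nat \<Rightarrow> (nat \<Rightarrow> quantity) \<Rightarrow> (nat \<Rightarrow> nat) \<Rightarrow> 'n::finite \<Rightarrow> nat \<times> nat" where
  "coord_enum M Q K = (SOME e. bij_betw e UNIV (contI M Q K))"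

definition chart :: "nat \<Rightarrow> (nat \<Rightarrow> quantity) \<Rightarrow> (nat \<Rightarrow> nat) \<Rightarrow> tuple \<Rightarrow> real^'n::finite \<Rightarrow> tuple" where
  "chart M Q K p t = (\<lambda>j k. if (j, k) \<in> contI M Q K
       then qshift (Q j) (p j k) (t $ inv (coord_enum M Q K :: 'n \<Rightarrow> nat \<times> nat) (j, k))
       else p j k)"

text \<open>Jacobian matrix (w.r.t. the standard Riemannian structures) at the point p of a map F
  defined on Y_m x N_m, where the point (y_m, g_m) is encoded as the tuple y_m(m := g_m).\<close>
definition jacobian :: "nat \<Rightarrow> (nat \<Rightarrow> quantity) \<Rightarrow> (nat \<Rightarrow> nat) \<Rightarrow> (tuple \<Rightarrow> real^'n) \<Rightarrow> tuple \<Rightarrow> real^'n^'n" where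
  "jacobian M Q K F p = matrix (frechet_derivative (\<lambda>t::real^'n. F (chart M Q K p t)) (at 0))"

definition pderiv_dir :: "'n::finite \<Rightarrow> (real^'n \<Rightarrow> real^'m) \<Rightarrow> real^'n \<Rightarrow> real^'m" where
  "pderiv_dir i f x = vector_derivative (\<lambda>s. f (x + s *\<^sub>R axis i 1)) (at 0)"

fun iter_pderiv :: "'n::finite list \<Rightarrow> (real^'n \<Rightarrow> real^'m) \<Rightarrow> real^'n \<Rightarrow> real^'m" where
  "iter_pderiv [] f = f"
| "iter_pderiv (i # is) f = pderiv_dir i (iter_pderiv is f)"

definition smooth_on :: "(real^'n::finite) set \<Rightarrow> (real^'n \<Rightarrow> real^'m) \<Rightarrow> bool" where
  "smooth_on S f \<longleftrightarrow> open S \<and>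
     (\<forall>is. \<forall>i. \<forall>x\<in>S. ((\<lambda>s. iter_pderiv is f (x + s *\<^sub>R axis i 1))
                          has_vector_derivative iter_pderiv (i # is) f x) (at 0)) \<and>
     (\<forall>is. continuous_on S (iter_pderiv is f))"

text \<open>C_m is a diffeomorphism Y_m x N_m -> U: a bijection which in the standard local
  charts is smooth with invertible derivative (a bijective local diffeomorphism is a
  diffeomorphism); the dimension count N = number of continuous coordinates is part of it.\<close>
definition DGWT_diffeo ::
  "nat \<Rightarrow> nat \<Rightarrow> (nat \<Rightarrow> quantity) \<Rightarrow> (nat \<Rightarrow> nat)
   \<Rightarrow> (nat \<Rightarrow> (nat \<Rightarrow> complex) \<Rightarrow> real^'n::finite^'n) \<Rightarrow> real^'n \<Rightarrow> (real^'n) set \<Rightarrow> bool" where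
  "DGWT_diffeo M m Q K D w U \<longleftrightarrow>
     card (contI M Q K) = CARD('n) \<and>
     bij_betw (\<lambda>(y, g). Cm M m Q K D w y g) (Ycarrier M Q K m \<times> Ncarrier (Q m) (K m)) U \<and>
     (\<forall>y\<in>Ycarrier M Q K m. \<forall>g\<in>Ncarrier (Q m) (K m).
        \<exists>S. 0 \<in> S \<and>
          smooth_on S (\<lambda>t::real^'n. Cm M m Q K D w (chart M Q K (y(m := g)) t)
                                               (chart M Q K (y(m := g)) t m)) \<and>
          invertible (jacobian M Q K (\<lambda>p. Cm M m Q K D w p (p m)) (y(m := g))))"

end

theory Submission
  imports Defs
begin

text \<open>Since D_m = D|N_m is a homomorphism, on the fibre through y_m
  C_m(y_m, g_m'^{-1} x) = omega_m D^m(y_m) D_m(x^{-1}) D_m(g_m') = C_m(y_m, x) D_m(g_m').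
  Left translation by g_m'^{-1} carries the standard chart at g_m to the standard chart at
  g_m'^{-1} g_m, so in these charts the two Jacobians differ by the factor D_m(g_m') and their
  determinants by det D_m(g_m'). The only analytic input is that C_m is differentiable in the
  chart, which follows from the continuity of its partial derivatives.\<close>

lemma vector_derivative_increment_bound:
  fixes f :: "'a::real_normed_vector \<Rightarrow> 'b::real_normed_vector"
  assumes deriv: "\<And>s. s \<in> closed_segment 0 a \<Longrightarrow>
      ((\<lambda>u. f (z + s *\<^sub>R v + u *\<^sub>R v)) has_vector_derivative P (z + s *\<^sub>R v)) (at 0)"
    and bound: "\<And>s. s \<in> closed_segment 0 a \<Longrightarrow> norm (P (z + s *\<^sub>R v) - c) \<le> B"
    and B: "0 \<le> B"
  shows "norm (f (z + a *\<^sub>R v) - f z - a *\<^sub>R c) \<le> B * \<bar>a\<bar>"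
proof -
  define \<phi> where "\<phi> s = f (z + s *\<^sub>R v) - s *\<^sub>R c" for s
  have \<phi>_deriv: "(\<phi> has_vector_derivative (P (z + s *\<^sub>R v) - c)) (at s)"
    if s: "s \<in> closed_segment 0 a" for s
  proof -
    have shift: "((\<lambda>t. t - s) has_vector_derivative 1) (at s)"
      by (auto intro!: derivative_eq_intros)
    have "((\<lambda>u. f (z + s *\<^sub>R v + u *\<^sub>R v)) \<circ> (\<lambda>t. t - s) has_vector_derivative P (z + s *\<^sub>R v)) (at s)"
      using vector_diff_chain_at[OF shift] deriv[OF s] by simp
    moreover have "(\<lambda>u. f (z + s *\<^sub>R v + u *\<^sub>R v)) \<circ> (\<lambda>t. t - s) = (\<lambda>t. f (z + t *\<^sub>R v))"
      by (auto simp: fun_eq_iff algebra_simps)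
    ultimately show ?thesis
      unfolding \<phi>_def by (auto intro!: derivative_eq_intros)
  qed
  have "norm (\<phi> a - \<phi> 0) \<le> B * norm (a - 0)"
  proof (rule differentiable_bound[where f'="\<lambda>s u. u *\<^sub>R (P (z + s *\<^sub>R v) - c)"])
    fix s assume s: "s \<in> closed_segment 0 a"
    show "(\<phi> has_derivative (\<lambda>u. u *\<^sub>R (P (z + s *\<^sub>R v) - c))) (at s within closed_segment 0 a)"
      using \<phi>_deriv[OF s] unfolding has_vector_derivative_def by (rule has_derivative_at_withinI)
    show "onorm (\<lambda>u. u *\<^sub>R (P (z + s *\<^sub>R v) - c)) \<le> B"
      using bound[OF s] B by (intro onorm_bound) (auto simp: mult.commute[of B] mult_left_mono)
  qed auto
  then show ?thesis by (simp add: \<phi>_def algebra_simps)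
qed

definition restrict_vec :: "'n::finite set \<Rightarrow> real^'n \<Rightarrow> real^'n" where
  "restrict_vec I h = (\<chi> k. if k \<in> I then h$k else 0)"

lemma restrict_vec_insert:
  "j \<notin> I \<Longrightarrow> restrict_vec (insert j I) h = restrict_vec I h + h$j *\<^sub>R axis j 1"
  by (auto simp: restrict_vec_def vec_eq_iff axis_def)

lemma norm_restrict_vec_le: "norm (restrict_vec I h + s *\<^sub>R axis j 1) \<le> norm h"
  if "j \<notin> I" "\<bar>s\<bar> \<le> \<bar>h$j\<bar>"
  using that by (intro norm_le_componentwise_cart) (auto simp: restrict_vec_def axis_def)

lemma partial_increment_bound:
  fixes f :: "real^'n::finite \<Rightarrow> 'b::real_normed_vector"
  assumes ball: "ball x r \<subseteq> S"
    and deriv: "\<And>z. z \<in> S \<Longrightarrow> ((\<lambda>s. f (z + s *\<^sub>R axis j 1)) has_vector_derivative P z) (at 0)"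
    and near: "\<And>z. dist z x < r \<Longrightarrow> norm (P z - P x) \<le> e"
    and "e \<ge> 0" "j \<notin> I" "norm h < r"
  shows "norm (f (x + restrict_vec (insert j I) h) - f (x + restrict_vec I h) - h$j *\<^sub>R P x)
       \<le> e * norm h"
proof -
  define z where "z = x + restrict_vec I h"
  have dist: "dist (z + s *\<^sub>R axis j 1) x < r" if "s \<in> closed_segment 0 (h$j)" for s
  proof -
    have "\<bar>s\<bar> \<le> \<bar>h$j\<bar>"
      using that by (auto simp: closed_segment_eq_real_ivl split: if_splits)
    then have "norm (restrict_vec I h + s *\<^sub>R axis j 1) \<le> norm h"
      by (rule norm_restrict_vec_le[OF \<open>j \<notin> I\<close>])
    then show ?thesis
      using \<open>norm h < r\<close> by (simp add: z_def dist_norm add.assoc)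
  qed
  have "norm (f (z + h$j *\<^sub>R axis j 1) - f z - h$j *\<^sub>R P x) \<le> e * \<bar>h$j\<bar>"
  proof (rule vector_derivative_increment_bound)
    fix s assume s: "s \<in> closed_segment 0 (h$j)"
    have "z + s *\<^sub>R axis j 1 \<in> S"
      using dist[OF s] ball by (auto simp: dist_commute)
    then show "((\<lambda>u. f (z + s *\<^sub>R axis j 1 + u *\<^sub>R axis j 1)) has_vector_derivative
                P (z + s *\<^sub>R axis j 1)) (at 0)"
      by (rule deriv)
    show "norm (P (z + s *\<^sub>R axis j 1) - P x) \<le> e"
      using near dist[OF s] .
  qed fact
  also have "\<dots> \<le> e * norm h"
    using \<open>e \<ge> 0\<close> by (simp add: component_le_norm_cart mult_left_mono)
  finally show ?thesis
    using \<open>j \<notin> I\<close> by (simp add: restrict_vec_insert z_def add.assoc)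
qed

lemma continuous_partials_remainder:
  fixes f :: "real^'n::finite \<Rightarrow> 'b::real_normed_vector"
  assumes S: "open S" "x \<in> S"
    and deriv: "\<And>i z. z \<in> S \<Longrightarrow> ((\<lambda>s. f (z + s *\<^sub>R axis i 1)) has_vector_derivative P i z) (at 0)"
    and cont: "\<And>i. continuous_on S (P i)"
    and "finite I" "e > 0"
  shows "\<exists>d>0. \<forall>h. norm h < d \<longrightarrow>
           norm (f (x + restrict_vec I h) - f x - (\<Sum>i\<in>I. h$i *\<^sub>R P i x)) \<le> e * norm h"
  using \<open>finite I\<close> \<open>e > 0\<close>
proof (induction I arbitrary: e rule: finite_induct)
  case empty
  then show ?case by (intro exI[of _ 1]) (simp add: restrict_vec_def zero_vec_def[symmetric])
next
  case (insert j I)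
  obtain d1 where d1: "d1 > 0" and D1: "\<And>h. norm h < d1 \<Longrightarrow>
      norm (f (x + restrict_vec I h) - f x - (\<Sum>i\<in>I. h$i *\<^sub>R P i x)) \<le> e/2 * norm h"
    using insert.IH[of "e/2"] insert.prems by auto
  obtain d2 where d2: "d2 > 0" and D2: "\<And>z. dist z x < d2 \<Longrightarrow> dist (P j z) (P j x) < e/2"
    using cont S insert.prems unfolding continuous_on_eq_continuous_at[OF \<open>open S\<close>] continuous_at_eps_delta
    by (meson half_gt_zero)
  obtain d3 where d3: "d3 > 0" and D3: "ball x d3 \<subseteq> S"
    using S open_contains_ball by blast
  have "norm (f (x + restrict_vec (insert j I) h) - f x - (\<Sum>i\<in>insert j I. h$i *\<^sub>R P i x))
        \<le> e * norm h" if h: "norm h < min d1 (min d2 d3)" for h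
  proof -
    have "norm (f (x + restrict_vec (insert j I) h) - f (x + restrict_vec I h) - h$j *\<^sub>R P j x)
        \<le> e/2 * norm h"
    proof (rule partial_increment_bound[where r="min d2 d3"])
      show "ball x (min d2 d3) \<subseteq> S" using D3 by auto
      show "norm (P j z - P j x) \<le> e/2" if "dist z x < min d2 d3" for z
        using D2 that by (simp add: dist_norm less_imp_le)
    qed (use deriv insert h in auto)
    moreover have "norm (f (x + restrict_vec I h) - f x - (\<Sum>i\<in>I. h$i *\<^sub>R P i x)) \<le> e/2 * norm h"
      using D1 h by simp
    ultimately have "norm ((f (x + restrict_vec (insert j I) h) - f (x + restrict_vec I h) - h$j *\<^sub>R P j x)
          + (f (x + restrict_vec I h) - f x - (\<Sum>i\<in>I. h$i *\<^sub>R P i x))) \<le> e * norm h"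
      by (intro norm_triangle_le) linarith
    then show ?thesis
      using insert.hyps by (simp add: algebra_simps)
  qed
  then show ?case
    using d1 d2 d3 by (intro exI[of _ "min d1 (min d2 d3)"]) auto
qed

lemma differentiable_at_if_continuous_partials:
  fixes f :: "real^'n::finite \<Rightarrow> 'b::real_normed_vector"
  assumes S: "open S" "x \<in> S"
    and deriv: "\<And>i z. z \<in> S \<Longrightarrow> ((\<lambda>s. f (z + s *\<^sub>R axis i 1)) has_vector_derivative P i z) (at 0)"
    and cont: "\<And>i. continuous_on S (P i)"
  shows "f differentiable (at x)"
proof -
  have "(f has_derivative (\<lambda>h. \<Sum>i\<in>UNIV. h$i *\<^sub>R P i x)) (at x)"
    unfolding has_derivative_at_alt
  proof (intro conjI allI impI)
    show "bounded_linear (\<lambda>h. \<Sum>i\<in>UNIV. h$i *\<^sub>R P i x)"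
      by (intro bounded_linear_intros bounded_linear_vec_nth)
    fix e :: real assume "e > 0"
    then obtain d where "d > 0" and d: "\<And>h. norm h < d \<Longrightarrow>
        norm (f (x + h) - f x - (\<Sum>i\<in>UNIV. h$i *\<^sub>R P i x)) \<le> e * norm h"
      using continuous_partials_remainder[OF S deriv cont, of UNIV e]
      by (auto simp: restrict_vec_def)
    then show "\<exists>d>0. \<forall>y. norm (y - x) < d \<longrightarrow>
        norm (f y - f x - (\<Sum>i\<in>UNIV. (y - x)$i *\<^sub>R P i x)) \<le> e * norm (y - x)"
      using d[of "_ - x"] by auto
  qed
  then show ?thesis unfolding differentiable_def by blast
qed

lemma smooth_on_differentiable_at:
  assumes "smooth_on S f" "x \<in> S"
  shows "f differentiable (at x)"
proof (rule differentiable_at_if_continuous_partials[where P="\<lambda>i. iter_pderiv [i] f"])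
  show "open S" "x \<in> S" "\<And>i. continuous_on S (iter_pderiv [i] f)"
    using assms unfolding smooth_on_def by blast+
  show "((\<lambda>s. f (z + s *\<^sub>R axis i 1)) has_vector_derivative iter_pderiv [i] f z) (at 0)"
    if "z \<in> S" for i z
    using assms that unfolding smooth_on_def by (metis iter_pderiv.simps(1))
qed

lemma matrix_frechet_derivative_vector_matrix_mult:
  fixes f :: "real^'n::finite \<Rightarrow> real^'m::finite"
  assumes "f differentiable (at x)"
  shows "matrix (frechet_derivative (\<lambda>t. f t v* B) (at x))
       = transpose B ** matrix (frechet_derivative f (at x))"
proof -
  let ?L = "frechet_derivative f (at x)"
  have L: "(f has_derivative ?L) (at x)"
    using assms by (rule frechet_derivative_works[THEN iffD1])
  have "((\<lambda>t. transpose B *v f t) has_derivative (\<lambda>v. transpose B *v ?L v)) (at x)"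
    by (rule bounded_linear.has_derivative[OF matrix_vector_mul_bounded_linear L])
  then have "frechet_derivative (\<lambda>t. transpose B *v f t) (at x) = (\<lambda>v. (transpose B ** matrix ?L) *v v)"
    using matrix_vector_mul(2)[OF has_derivative_linear[OF L]]
    by (simp add: frechet_derivative_at[symmetric] matrix_vector_mul_assoc[symmetric] del: transpose_matrix_vector)
  then show ?thesis by simp
qed

lemma qunit_in_qcarrier: "qunit q \<in> qcarrier q"
  by (cases q) (auto simp: qunit_def intro: range_eqI[of _ _ 0])

lemma qinv_in_qcarrier: "z \<in> qcarrier q \<Longrightarrow> qinv q z \<in> qcarrier q"
  by (cases q) (auto simp: qinv_def norm_inverse power_inverse
      intro: range_eqI[where x="- _" and f=of_int] range_eqI[where x="- _" and f=complex_of_real])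

lemma qshift_in_qcarrier: "z \<in> qcarrier q \<Longrightarrow> qshift q z t \<in> qcarrier q"
  by (cases q) (auto simp: qshift_def norm_mult intro: range_eqI[where x="_ + t"])

text \<open>Roots 0 is excluded because its carrier is all of the complex numbers, where 0 is a
  second idempotent.\<close>
lemma qcarrier_nonzero:
  "\<not> additive q \<Longrightarrow> (\<forall>n. q = Roots n \<longrightarrow> n \<ge> 1) \<Longrightarrow> z \<in> qcarrier q \<Longrightarrow> z \<noteq> 0"
  by (cases q) (auto simp: power_0_left)

lemma Nunit_in_Ncarrier: "Nunit q K \<in> Ncarrier q K"
  by (auto simp: Nunit_def Ncarrier_def qunit_in_qcarrier)

lemma Ninv_in_Ncarrier: "g \<in> Ncarrier q K \<Longrightarrow> Ninv q K g \<in> Ncarrier q K"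
  by (auto simp: Ninv_def Ncarrier_def qinv_in_qcarrier)

lemma Nmul_Nunit_Nunit: "Nmul q K (Nunit q K) (Nunit q K) = Nunit q K"
  by (auto simp: Nmul_def Nunit_def qop_def qunit_def fun_eq_iff)

lemma Ninv_Nmul_Ninv: "Ninv q K (Nmul q K (Ninv q K a) x) = Nmul q K (Ninv q K x) a"
  by (auto simp: Ninv_def Nmul_def qinv_def qop_def fun_eq_iff inverse_mult_distrib mult.commute)

lemma Nmul_idem_eq_Nunit:
  assumes c: "c \<in> Ncarrier q K" and idem: "Nmul q K c c = c" and q: "\<forall>n. q = Roots n \<longrightarrow> n \<ge> 1"
  shows "c = Nunit q K"
proof
  fix k
  show "c k = Nunit q K k"
  proof (cases "k < K")
    case True
    have "qop q (c k) (c k) = c k"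
      using idem True by (metis Nmul_def)
    moreover have "c k \<in> qcarrier q"
      using c True by (auto simp: Ncarrier_def)
    ultimately show ?thesis
      using True qcarrier_nonzero[OF _ q] by (auto simp: qop_def Nunit_def qunit_def)
  next
    case False
    then show ?thesis using c by (auto simp: Ncarrier_def Nunit_def)
  qed
qed

lemma Nhom_Nunit:
  assumes hom: "\<And>g g'. g \<in> Ncarrier q K \<Longrightarrow> g' \<in> Ncarrier q K \<Longrightarrow> \<alpha> (Nmul q K g g') = Nmul q K (\<alpha> g) (\<alpha> g')"
    and "\<alpha> (Nunit q K) \<in> Ncarrier q K" and "\<forall>n. q = Roots n \<longrightarrow> n \<ge> 1"
  shows "\<alpha> (Nunit q K) = Nunit q K"
  using assms hom[OF Nunit_in_Ncarrier Nunit_in_Ncarrier]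
  by (intro Nmul_idem_eq_Nunit) (auto simp: Nmul_Nunit_Nunit)

lemma Dprod_eq_mat_1: "\<forall>j\<in>set js. D j (h j) = mat 1 \<Longrightarrow> Dprod D h js = mat 1"
  by (induction js) (auto simp: Dprod_def matrix_mul_lid)

lemma Dprod_eq_single:
  "distinct js \<Longrightarrow> m \<in> set js \<Longrightarrow> \<forall>j\<in>set js. j \<noteq> m \<longrightarrow> D j (h j) = mat 1
   \<Longrightarrow> Dprod D h js = D m (h m)"
proof (induction js)
  case (Cons j js)
  show ?case
  proof (cases "j = m")
    case True
    with Cons.prems have "Dprod D h js = mat 1"
      by (intro Dprod_eq_mat_1) auto
    with True show ?thesis by (simp add: Dprod_def matrix_mul_rid)
  next
    case False
    with Cons show ?thesis by (simp add: Dprod_def matrix_mul_lid)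
  qed
qed simp

lemma Dprod_cong: "\<forall>j\<in>set js. a j = b j \<Longrightarrow> Dprod D a js = Dprod D b js"
  by (induction js) (auto simp: Dprod_def)

lemma chart_upd_other: "j \<noteq> m \<Longrightarrow> chart M Q K (y(m := a)) t j = chart M Q K (y(m := b)) t j"
  by (simp add: chart_def fun_eq_iff)

lemma chart_upd_Nmul:
  "chart M Q K (y(m := Nmul (Q m) (K m) a b)) t m = Nmul (Q m) (K m) a (chart M Q K (y(m := b)) t m)"
  by (rule ext, cases "Q m") (auto simp: chart_def contI_def Nmul_def qop_def qshift_def algebra_simps)

lemma chart_upd_in_Ncarrier:
  "g \<in> Ncarrier (Q m) (K m) \<Longrightarrow> chart M Q K (y(m := g)) t m \<in> Ncarrier (Q m) (K m)"
  by (auto simp: chart_def contI_def Ncarrier_def qshift_in_qcarrier)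

context
  fixes M m Q K A and D :: "nat \<Rightarrow> (nat \<Rightarrow> complex) \<Rightarrow> real^'n::finite^'n"
  assumes setting: "group_setting M Q K A D" and m: "m \<in> {2..M}"
begin

lemma Hunit_upd_in_Hcarrier:
  "c \<in> Ncarrier (Q m) (K m) \<Longrightarrow> (Hunit M Q K)(m := c) \<in> Hcarrier M Q K"
  using m by (auto simp: Hcarrier_def Tcarrier_def Hunit_def Nunit_in_Ncarrier)

lemma Dfull_Hunit_upd: "Dfull M D ((Hunit M Q K)(m := c)) = D m c"
  unfolding Dfull_def
  using m setting by (subst Dprod_eq_single[where m=m]) (auto simp: Hunit_def group_setting_def)

lemma Hmul_Hunit_upd:
  assumes a: "a \<in> Ncarrier (Q m) (K m)" and b: "b \<in> Ncarrier (Q m) (K m)"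
  shows "Hmul M Q K A ((Hunit M Q K)(m := a)) ((Hunit M Q K)(m := b))
       = (Hunit M Q K)(m := Nmul (Q m) (K m) a b)"
proof
  let ?E = "Hunit M Q K"
  note GS = setting[unfolded group_setting_def]
  fix j
  show "Hmul M Q K A (?E(m := a)) (?E(m := b)) j = (?E(m := Nmul (Q m) (K m) a b)) j"
  proof (cases "j \<in> {2..M}")
    case j: True
    let ?\<tau> = "tail j (?E(m := a))"
    show ?thesis
    proof (cases "j = m")
      case True
      have "?\<tau> = tail j ?E" by (auto simp: tail_def fun_eq_iff True)
      then have "A j ?\<tau> b = b" using GS m b True by auto
      then show ?thesis using True j by (simp add: Hmul_def)
    next
      case False
      have "?\<tau> \<in> Tcarrier Q K {Suc j..M}"
        using j m a by (auto simp: Tcarrier_def tail_def Hunit_def Nunit_in_Ncarrier)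
      then have bij: "bij_betw (A j ?\<tau>) (Ncarrier (Q j) (K j)) (Ncarrier (Q j) (K j))"
        and hom: "\<And>g g'. g \<in> Ncarrier (Q j) (K j) \<Longrightarrow> g' \<in> Ncarrier (Q j) (K j) \<Longrightarrow>
           A j ?\<tau> (Nmul (Q j) (K j) g g') = Nmul (Q j) (K j) (A j ?\<tau> g) (A j ?\<tau> g')"
        using GS j by blast+
      then have "A j ?\<tau> (Nunit (Q j) (K j)) = Nunit (Q j) (K j)"
        using GS j by (intro Nhom_Nunit[OF hom bij_betw_apply[OF bij Nunit_in_Ncarrier]]) auto
      then show ?thesis using False j by (simp add: Hmul_def Hunit_def Nmul_Nunit_Nunit)
    qed
  next
    case False
    then show ?thesis using m by (auto simp: Hmul_def Hunit_def)
  qed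
qed

lemma D_Nmul:
  assumes "a \<in> Ncarrier (Q m) (K m)" "b \<in> Ncarrier (Q m) (K m)"
  shows "D m (Nmul (Q m) (K m) a b) = D m a ** D m b"
  using setting assms Hmul_Hunit_upd[OF assms] Hunit_upd_in_Hcarrier[OF assms(1)]
    Hunit_upd_in_Hcarrier[OF assms(2)]
  unfolding group_setting_def by (metis Dfull_Hunit_upd)

lemma Cm_chart_left_translate:
  fixes w :: "real^'n"
  assumes g: "g \<in> Ncarrier (Q m) (K m)" and g': "g' \<in> Ncarrier (Q m) (K m)"
  defines "F \<equiv> \<lambda>p. Cm M m Q K D w p (p m)"
  shows "F (chart M Q K (y(m := Nmul (Q m) (K m) (Ninv (Q m) (K m) g') g)) t)
       = F (chart M Q K (y(m := g)) t) v* D m g'"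
proof -
  let ?x = "chart M Q K (y(m := g)) t m" and ?N = "Nmul (Q m) (K m)" and ?I = "Ninv (Q m) (K m)"
  have "?I (chart M Q K (y(m := ?N (?I g') g)) t m) = ?N (?I ?x) g'"
    by (simp add: chart_upd_Nmul Ninv_Nmul_Ninv)
  then have "D m (?I (chart M Q K (y(m := ?N (?I g') g)) t m)) = D m (?I ?x) ** D m g'"
    using D_Nmul[OF Ninv_in_Ncarrier[OF chart_upd_in_Ncarrier[of g Q m K M y t, OF g]] g']
    by simp
  moreover have "Dm_other M m D (chart M Q K (y(m := ?N (?I g') g)) t)
      = Dm_other M m D (chart M Q K (y(m := g)) t)"
    unfolding Dm_other_def by (rule Dprod_cong) (auto intro: chart_upd_other)
  ultimately show ?thesis
    by (simp add: F_def Cm_def vector_matrix_mul_assoc[symmetric] matrix_mul_assoc)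
qed

end

theorem lemma2:
  fixes M m :: nat
    and Q :: "nat \<Rightarrow> quantity" and K :: "nat \<Rightarrow> nat"
    and A :: "nat \<Rightarrow> tuple \<Rightarrow> (nat \<Rightarrow> complex) \<Rightarrow> (nat \<Rightarrow> complex)"
    and D :: "nat \<Rightarrow> (nat \<Rightarrow> complex) \<Rightarrow> real^'n::finite^'n"
    and w0 :: "real^'n" and w :: "nat \<Rightarrow> real^'n"
    and y :: tuple and g g' :: "nat \<Rightarrow> complex"
  assumes setting: "group_setting M Q K A D"
    and U_open: "open (Uset M Q K D w0)"
    and U_dense: "closure (Uset M Q K D w0) = UNIV"
    and dgwt: "\<forall>m'\<in>{2..M}. DGWT_diffeo M m' Q K D (w m') (Uset M Q K D w0)"
    and m: "m \<in> {2..M}"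
    and y: "y \<in> Ycarrier M Q K m"
    and g: "g \<in> Ncarrier (Q m) (K m)"
    and g': "g' \<in> Ncarrier (Q m) (K m)"
  shows "\<bar>det (jacobian M Q K (\<lambda>p. Cm M m Q K D (w m) p (p m))
                 (y(m := Nmul (Q m) (K m) (Ninv (Q m) (K m) g') g)))\<bar>
         = \<bar>det (D m g')\<bar> * \<bar>det (jacobian M Q K (\<lambda>p. Cm M m Q K D (w m) p (p m)) (y(m := g)))\<bar>"
proof -
  define F where "F = (\<lambda>p. Cm M m Q K D (w m) p (p m))"
  define f where "f = (\<lambda>t::real^'n. F (chart M Q K (y(m := g)) t))"
  obtain S where "0 \<in> S" "smooth_on S f"
    using dgwt m y g unfolding DGWT_diffeo_def f_def F_def by blast
  then have "f differentiable (at 0)"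
    by (rule smooth_on_differentiable_at[rotated])
  moreover have "(\<lambda>t. F (chart M Q K (y(m := Nmul (Q m) (K m) (Ninv (Q m) (K m) g') g)) t))
      = (\<lambda>t. f t v* D m g')"
    by (simp add: F_def f_def Cm_chart_left_translate[OF setting m g g'])
  ultimately have "jacobian M Q K F (y(m := Nmul (Q m) (K m) (Ninv (Q m) (K m) g') g))
      = transpose (D m g') ** jacobian M Q K F (y(m := g))"
    unfolding jacobian_def f_def by (simp add: matrix_frechet_derivative_vector_matrix_mult)
  then show ?thesis
    by (simp add: F_def det_mul det_transpose abs_mult)
qed

end
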